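(* In the Setting below, for each $i$ the digraph $O_i$ is an out-tree rooted at $r$, and every vertex of $O_i$ with positive out-degree has out-degree at least two.
   Context: A test $T$ on $[n]$ separates $i\neq j$ if $|\{i,j\}\cap T|=1$. The classes induced by a collection $\mathcal{T}'$ of tests are the equivalence classes of the relation "$i,j$ are not separated by any test of $\mathcal{T}'$". Setting: $\mathcal{T}$ is a collection of distinct tests on $[n]$ that is a test cover and contains every singleton $\{x\}$, $x\in[n]$; $\mathcal{F}\subseteq\mathcal{T}$ has the property that for every $T\in\mathcal{T}\setminus\mathcal{F}$, $\mathcal{F}\cup\{T\}$ induces at most one more class than $\mathcal{F}$, and for every two $T,T'\in\mathcal{T}\setminus\mathcal{F}$, $\mathcal{F}\cup\{T,T'\}$ induces at most two more classes than $\mathcal{F}$. Let $C_1,\dots,C_l$ be the classes induced by $\mathcal{F}$. For $C\subseteq[n]$, a test $S\in\mathcal{T}$ is a $C$-test if $S\cap C\neq\emptyset$ and $C\setminus S\neq\emptyset$; $L(S)=S\cap C$. Every $C_i$-test $S$ satisfies $|S\cap C_i|\le|C_i|/2$. The digraph $O_i$ has a root vertex $r$ with $S_r=C_i$, and one further vertex $v$ for each distinct set $S_v\subseteq C_i$ such that $S_v=L(S)$ for some $C_i$-test $S\in\mathcal{T}$; there is an arc from $v$ to $w$ iff $S_w\subsetneq S_v$ and there is no vertex $u$ with $S_w\subsetneq S_u\subsetneq S_v$. An out-tree is an orientation of a tree with exactly one vertex of in-degree zero (the root). *)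

theory Defs
  imports Main
begin

definition separates :: "nat set \<Rightarrow> nat \<Rightarrow> nat \<Rightarrow> bool" where
  "separates T i j \<equiv> i \<noteq> j \<and> card ({i, j} \<inter> T) = 1"

definition is_test_cover :: "nat \<Rightarrow> nat set set \<Rightarrow> bool" where
  "is_test_cover n \<T> \<equiv> (\<forall>T\<in>\<T>. T \<subseteq> {1..n}) \<and>
     (\<forall>i\<in>{1..n}. \<forall>j\<in>{1..n}. i \<noteq> j \<longrightarrow> (\<exists>T\<in>\<T>. separates T i j))"

text \<open>The relation "i, j are not separated by any test of \<T>'" on [n] (reflexive by convention).\<close>
definition not_sep_rel :: "nat \<Rightarrow> nat set set \<Rightarrow> (nat \<times> nat) set" where
  "not_sep_rel n \<T>' \<equiv> {(i, j). i \<in> {1..n} \<and> j \<in> {1..n} \<and> \<not> (\<exists>T\<in>\<T>'. separates T i j)}"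

definition induced_classes :: "nat \<Rightarrow> nat set set \<Rightarrow> nat set set" where
  "induced_classes n \<T>' \<equiv> {1..n} // not_sep_rel n \<T>'"

definition is_C_test :: "nat set \<Rightarrow> nat set \<Rightarrow> bool" where
  "is_C_test C S \<equiv> S \<inter> C \<noteq> {} \<and> C - S \<noteq> {}"

text \<open>Vertices are identified with their sets S_v: the root C and the distinct sets S \<inter> C
  for C-tests S in \<T>.\<close>
definition O_verts :: "nat set set \<Rightarrow> nat set \<Rightarrow> nat set set" where
  "O_verts \<T> C \<equiv> insert C {S \<inter> C | S. S \<in> \<T> \<and> is_C_test C S}"

definition O_arcs :: "nat set set \<Rightarrow> nat set \<Rightarrow> (nat set \<times> nat set) set" where
  "O_arcs \<T> C \<equiv> {(A, B). A \<in> O_verts \<T> C \<and> B \<in> O_verts \<T> C \<and> B \<subset> A \<and>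
      \<not> (\<exists>U\<in>O_verts \<T> C. B \<subset> U \<and> U \<subset> A)}"

definition ucycle :: "'a set \<Rightarrow> ('a \<Rightarrow> 'a \<Rightarrow> bool) \<Rightarrow> 'a list \<Rightarrow> bool" where
  "ucycle V E xs \<equiv> 3 \<le> length xs \<and> distinct xs \<and> set xs \<subseteq> V \<and>
     (\<forall>i. Suc i < length xs \<longrightarrow> E (xs ! i) (xs ! Suc i)) \<and> E (last xs) (hd xs)"

definition is_utree :: "'a set \<Rightarrow> ('a \<Rightarrow> 'a \<Rightarrow> bool) \<Rightarrow> bool" where
  "is_utree V E \<equiv> V \<noteq> {} \<and>
     (\<forall>u\<in>V. \<forall>v\<in>V. (u, v) \<in> {(x, y). x \<in> V \<and> y \<in> V \<and> E x y}\<^sup>*) \<and>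
     \<not> (\<exists>xs. ucycle V E xs)"

definition in_degree :: "('a \<times> 'a) set \<Rightarrow> 'a \<Rightarrow> nat" where
  "in_degree A v \<equiv> card {u. (u, v) \<in> A}"

definition out_degree :: "('a \<times> 'a) set \<Rightarrow> 'a \<Rightarrow> nat" where
  "out_degree A v \<equiv> card {w. (v, w) \<in> A}"

definition is_out_tree_rooted :: "'a set \<Rightarrow> ('a \<times> 'a) set \<Rightarrow> 'a \<Rightarrow> bool" where
  "is_out_tree_rooted V A r \<equiv> finite V \<and> A \<subseteq> V \<times> V \<and>
     (\<forall>u v. (u, v) \<in> A \<longrightarrow> u \<noteq> v \<and> (v, u) \<notin> A) \<and>
     is_utree V (\<lambda>u v. (u, v) \<in> A \<or> (v, u) \<in> A) \<and>
     {v \<in> V. in_degree A v = 0} = {r}"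

end

theory Submission
  imports Defs
begin

(* Fix a class C of the partition induced by F.  The vertices of O_C are
   C together with the traces S \<inter> C of the C-tests, and the arcs of O_C are exactly the covering
   pairs (the Hasse diagram) of this set family under proper inclusion.

   For a finite family V of sets that is laminar (any two members are
   disjoint or nested), has a top element C, and has no empty member besides possibly C,
   every member other than C has exactly one cover; hence the Hasse diagram is an out-tree
   rooted at C.  If moreover V contains every singleton {x} with x \<in> C (x in a proper subset),
   a vertex with a child w also has a child containing a point outside w, so it branches.

   Two C-tests S, S' whose traces cross would, by the half-size bound, leave
   a point of C outside both traces; then S and S' cut C into four non-empty pieces, so adding
   them to F creates at least three new classes, contradicting the two-test hypothesis.  Hence
   the traces form a laminar family, and the singleton tests supply the singletons. *)

definition hasse :: "'a set set \<Rightarrow> ('a set \<times> 'a set) set" where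
  "hasse V = {(A, B). A \<in> V \<and> B \<in> V \<and> B \<subset> A \<and> \<not> (\<exists>U\<in>V. B \<subset> U \<and> U \<subset> A)}"

lemma ucycle_two_neighbours:
  assumes cyc: "ucycle V E xs" and x: "x \<in> set xs"
  shows "\<exists>u\<in>set xs. \<exists>w\<in>set xs. u \<noteq> w \<and> E u x \<and> E x w"
proof -
  define L where "L = length xs"
  have L3: "3 \<le> L" and dist: "distinct xs"
    and step: "\<And>i. Suc i < L \<Longrightarrow> E (xs ! i) (xs ! Suc i)" and close: "E (last xs) (hd xs)"
    using cyc unfolding ucycle_def L_def by auto
  have ne: "xs \<noteq> []" using L3 L_def by auto
  have hd: "hd xs = xs ! 0" and last: "last xs = xs ! (L - 1)"
    using ne by (simp_all add: hd_conv_nth last_conv_nth L_def)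
  have nth_eq: "xs ! j = xs ! k \<longleftrightarrow> j = k" if "j < L" "k < L" for j k
    using dist that nth_eq_iff_index_eq L_def by blast
  have mem: "xs ! j \<in> set xs" if "j < L" for j using that L_def by simp
  obtain i where i: "i < L" "x = xs ! i" using x L_def by (metis in_set_conv_nth)
  consider "i = 0" | "0 < i" "Suc i = L" | "0 < i" "Suc i < L" using i(1) by linarith
  then show ?thesis
  proof cases
    case 1
    have "E (xs ! (L - 1)) x" "E x (xs ! 1)" "xs ! (L - 1) \<noteq> xs ! 1"
      using close step[of 0] L3 1 i hd last nth_eq by auto
    moreover have "L - 1 < L" "1 < L" using L3 by auto
    ultimately show ?thesis using mem by blast
  next
    case 2
    have "E (xs ! (i - 1)) x" "E x (xs ! 0)" "xs ! (i - 1) \<noteq> xs ! 0"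
      using close step[of "i - 1"] L3 2 i hd last nth_eq by auto
    moreover have "i - 1 < L" "0 < L" using i(1) by auto
    ultimately show ?thesis using mem by blast
  next
    case 3
    have "E (xs ! (i - 1)) x" "E x (xs ! Suc i)" "xs ! (i - 1) \<noteq> xs ! Suc i"
      using step[of "i - 1"] step[of i] 3 i nth_eq by auto
    moreover have "i - 1 < L" using i(1) by simp
    ultimately show ?thesis using mem 3 by blast
  qed
qed

lemma hasse_child_above:
  assumes "finite V" "X \<in> V" "Y \<in> V" "Y \<subset> X"
  shows "\<exists>U. (X, U) \<in> hasse V \<and> Y \<subseteq> U"
proof -
  let ?M = "{U\<in>V. Y \<subseteq> U \<and> U \<subset> X}"
  have "finite ?M" "?M \<noteq> {}" using assms by auto
  then obtain m where m: "m \<in> ?M" "\<forall>U\<in>?M. m \<subseteq> U \<longrightarrow> m = U"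
    by (meson finite_has_maximal)
  moreover have "\<not> (\<exists>U\<in>V. m \<subset> U \<and> U \<subset> X)"
    using m by blast
  ultimately have "(X, m) \<in> hasse V"
    unfolding hasse_def using assms(2) by blast
  then show ?thesis using m by blast
qed

lemma hasse_parent_below:
  assumes "finite V" "X \<in> V" "Y \<in> V" "Y \<subset> X"
  shows "\<exists>U. (U, Y) \<in> hasse V \<and> U \<subseteq> X"
proof -
  let ?M = "{U\<in>V. Y \<subset> U \<and> U \<subseteq> X}"
  have "finite ?M" "?M \<noteq> {}" using assms by auto
  then obtain m where m: "m \<in> ?M" "\<forall>U\<in>?M. U \<subseteq> m \<longrightarrow> m = U"
    by (meson finite_has_minimal)
  moreover have "\<not> (\<exists>U\<in>V. Y \<subset> U \<and> U \<subset> m)"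
    using m by blast
  ultimately have "(m, Y) \<in> hasse V"
    unfolding hasse_def using assms(3) by blast
  then show ?thesis using m by blast
qed

(* A member v with a non-empty child w branches if the points of v outside w are members:
   the child of v above such a singleton differs from w. *)
lemma hasse_out_degree_two:
  assumes fin: "finite V" and vw: "(v, w) \<in> hasse V" and w_ne: "w \<noteq> {}"
    and singletons: "\<And>x. x \<in> v - w \<Longrightarrow> {x} \<in> V"
  shows "2 \<le> out_degree (hasse V) v"
proof -
  have wv: "w \<subset> v" and v: "v \<in> V" using vw unfolding hasse_def by auto
  obtain x where x: "x \<in> v" "x \<notin> w" using wv by blast
  have "{x} \<in> V" "{x} \<subset> v" using singletons x wv w_ne by blast+
  then obtain u where u: "(v, u) \<in> hasse V" "x \<in> u"
    using hasse_child_above[OF fin v] by blast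
  have "{w, u} \<subseteq> {w. (v, w) \<in> hasse V}" using u vw by blast
  moreover have "finite {w. (v, w) \<in> hasse V}"
    using fin by (rule finite_subset[rotated]) (auto simp: hasse_def)
  moreover have "u \<noteq> w" using u x by blast
  then have "card {w, u} = 2" by simp
  ultimately show ?thesis unfolding out_degree_def by (metis card_mono)
qed

definition laminar :: "'a set set \<Rightarrow> bool" where
  "laminar V \<longleftrightarrow> (\<forall>X\<in>V. \<forall>Y\<in>V. X \<inter> Y = {} \<or> X \<subseteq> Y \<or> Y \<subseteq> X)"

locale rooted_laminar =
  fixes V :: "'a set set" and C :: "'a set"
  assumes finite_family: "finite V" and root_in: "C \<in> V"
    and below_root: "\<And>X. X \<in> V \<Longrightarrow> X \<subseteq> C"
    and nonempty: "\<And>X. X \<in> V \<Longrightarrow> X \<noteq> C \<Longrightarrow> X \<noteq> {}"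
    and laminar: "laminar V"
begin

abbreviation adjacent :: "'a set \<Rightarrow> 'a set \<Rightarrow> bool" where
  "adjacent u v \<equiv> (u, v) \<in> hasse V \<or> (v, u) \<in> hasse V"

abbreviation adj_rel :: "('a set \<times> 'a set) set" where
  "adj_rel \<equiv> {(x, y). x \<in> V \<and> y \<in> V \<and> adjacent x y}"

lemma has_parent:
  assumes "X \<in> V" "X \<noteq> C"
  shows "\<exists>P. (P, X) \<in> hasse V"
  using hasse_parent_below[OF finite_family root_in assms(1)] below_root assms by blast

(* ... and only one: two parents of a non-empty set intersect, so by laminarity they are
   nested, contradicting that both are covers. *)
lemma unique_parent:
  assumes P: "(P, Y) \<in> hasse V" and Q: "(Q, Y) \<in> hasse V"
  shows "P = Q"
proof -
  have h: "P \<in> V" "Q \<in> V" "Y \<in> V" "Y \<subset> P" "Y \<subset> Q"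
    "\<not> (\<exists>U\<in>V. Y \<subset> U \<and> U \<subset> P)" "\<not> (\<exists>U\<in>V. Y \<subset> U \<and> U \<subset> Q)"
    using P Q unfolding hasse_def by auto
  have "Y \<noteq> {}" using nonempty[OF h(3)] below_root[OF h(1)] h(4) by blast
  then have "P \<inter> Q \<noteq> {}" using h(4,5) by blast
  then have "P \<subseteq> Q \<or> Q \<subseteq> P" using laminar h(1,2) unfolding laminar_def by blast
  then show ?thesis using h by blast
qed

lemma reaches_root:
  assumes "v \<in> V"
  shows "(v, C) \<in> adj_rel\<^sup>*"
  using assms
proof (induction "card {U\<in>V. v \<subset> U}" arbitrary: v rule: less_induct)
  case less
  show ?case
  proof (cases "v = C")
    case False
    then obtain p where p: "(p, v) \<in> hasse V" using has_parent less.prems by blast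
    then have pv: "p \<in> V" "v \<subset> p" unfolding hasse_def by auto
    have "{U\<in>V. p \<subset> U} \<subset> {U\<in>V. v \<subset> U}" using pv by (blast intro: psubset_trans)
    then have "card {U\<in>V. p \<subset> U} < card {U\<in>V. v \<subset> U}"
      by (rule psubset_card_mono[rotated]) (simp add: finite_family)
    then have "(p, C) \<in> adj_rel\<^sup>*" using less.hyps pv(1) by blast
    moreover have "(v, p) \<in> adj_rel" using p pv(1) less.prems by simp
    ultimately show ?thesis by (rule converse_rtrancl_into_rtrancl[rotated])
  qed simp
qed

lemma connected:
  assumes "u \<in> V" "v \<in> V"
  shows "(u, v) \<in> adj_rel\<^sup>*"
proof -
  have "(v, C) \<in> adj_rel\<^sup>*" using reaches_root assms(2) .
  then have "(C, v) \<in> (adj_rel\<inverse>)\<^sup>*" by (simp add: rtrancl_converseI)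
  moreover have "adj_rel\<inverse> = adj_rel" by auto
  ultimately show ?thesis using rtrancl_trans[OF reaches_root[OF assms(1)]] by simp
qed

(* No cycles: a minimal set on a cycle would have two distinct neighbours on it, both
   necessarily its parents in the Hasse diagram, contradicting uniqueness of parents. *)
lemma no_cycle: "\<not> ucycle V adjacent xs"
proof
  assume cyc: "ucycle V adjacent xs"
  then have "finite (set xs)" "set xs \<noteq> {}" unfolding ucycle_def by auto
  then obtain m where m: "m \<in> set xs" "\<forall>b\<in>set xs. b \<subseteq> m \<longrightarrow> m = b"
    by (meson finite_has_minimal)
  have parent: "(y, m) \<in> hasse V" if "y \<in> set xs" "adjacent y m" for y
  proof -
    have "(m, y) \<notin> hasse V" using m that(1) unfolding hasse_def by blast
    then show ?thesis using that(2) by blast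
  qed
  obtain u w where "u \<in> set xs" "w \<in> set xs" "u \<noteq> w" "adjacent u m" "adjacent m w"
    using ucycle_two_neighbours[OF cyc m(1)] by blast
  then show False using parent unique_parent by metis
qed

lemma root_unique_source: "{v \<in> V. in_degree (hasse V) v = 0} = {C}"
proof -
  have "in_degree (hasse V) v \<noteq> 0" if v: "v \<in> V" "v \<noteq> C" for v
  proof -
    obtain p where p: "(p, v) \<in> hasse V" using has_parent v by blast
    have "{u. (u, v) \<in> hasse V} \<subseteq> V" unfolding hasse_def by auto
    then have "finite {u. (u, v) \<in> hasse V}" using finite_family finite_subset by blast
    then show ?thesis unfolding in_degree_def using p by auto
  qed
  moreover have "{u. (u, C) \<in> hasse V} = {}" unfolding hasse_def using below_root by auto
  ultimately show ?thesis using root_in by (force simp: in_degree_def)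
qed

theorem out_tree: "is_out_tree_rooted V (hasse V) C"
proof -
  have "is_utree V adjacent" unfolding is_utree_def using connected no_cycle root_in by blast
  moreover have "hasse V \<subseteq> V \<times> V" unfolding hasse_def by blast
  moreover have "\<forall>u v. (u, v) \<in> hasse V \<longrightarrow> u \<noteq> v \<and> (v, u) \<notin> hasse V"
    unfolding hasse_def by blast
  ultimately show ?thesis
    unfolding is_out_tree_rooted_def using finite_family root_unique_source by blast
qed

lemma out_degree_two:
  assumes singletons: "\<And>x. x \<in> C \<Longrightarrow> C \<noteq> {x} \<Longrightarrow> {x} \<in> V"
    and pos: "0 < out_degree (hasse V) v"
  shows "2 \<le> out_degree (hasse V) v"
proof -
  have "{w. (v, w) \<in> hasse V} \<noteq> {}"
    using pos unfolding out_degree_def by (metis card.empty less_irrefl)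
  then obtain w where vw: "(v, w) \<in> hasse V" by blast
  have w: "w \<in> V" "w \<subset> v" "v \<subseteq> C" using vw below_root unfolding hasse_def by auto
  have "w \<noteq> {}" using nonempty[OF w(1)] w(2,3) by blast
  moreover have "{x} \<in> V" if "x \<in> v - w" for x
    using singletons that \<open>w \<noteq> {}\<close> w(2,3) by blast
  ultimately show ?thesis using hasse_out_degree_two[OF finite_family vw] by blast
qed

end

lemma separates_iff: "separates T i j \<longleftrightarrow> i \<noteq> j \<and> (i \<in> T \<longleftrightarrow> j \<notin> T)"
  by (cases "i \<in> T"; cases "j \<in> T") (auto simp: separates_def Int_insert_left)

lemma not_sep_rel_iff:
  "(i, j) \<in> not_sep_rel n X \<longleftrightarrow> i \<in> {1..n} \<and> j \<in> {1..n} \<and> (\<forall>T\<in>X. i \<in> T \<longleftrightarrow> j \<in> T)"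
  unfolding not_sep_rel_def using separates_iff by auto

lemma not_sep_rel_equiv: "equiv {1..n} (not_sep_rel n X)"
  by (rule equivI) (auto simp: refl_on_def sym_def trans_def not_sep_rel_iff)

(* Counting lemma for refinements: if R1 refines R0 and K is a set of R1-classes inside one
   R0-class C, then the other R0-classes still contribute one R1-class each. *)
lemma refinement_card_bound:
  assumes e0: "equiv I R0" and e1: "equiv I R1" and R: "R1 \<subseteq> R0" and fI: "finite I"
    and C: "C \<in> I // R0" and K: "K \<subseteq> I // R1" and KC: "\<forall>k\<in>K. k \<subseteq> C"
  shows "card (I // R0) - 1 + card K \<le> card (I // R1)"
proof -
  define rep where "rep D = (SOME x. x \<in> D)" for D :: "'a set"
  define g where "g D = R1 `` {rep D}" for D
  have repD: "rep D \<in> D" if "D \<in> I // R0" for D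
    using in_quotient_imp_non_empty[OF e0 that] unfolding rep_def by (simp add: some_in_eq)
  have DI: "D \<subseteq> I" if "D \<in> I // R0" for D
    using that equiv_type[OF e0] by (auto elim!: quotientE)
  have gQ: "g D \<in> I // R1" if "D \<in> I // R0" for D
    unfolding g_def using repD[OF that] DI[OF that] by (auto intro: quotientI)
  have gsub: "g D \<subseteq> D" if "D \<in> I // R0" for D
  proof
    fix y assume "y \<in> g D"
    then have "(rep D, y) \<in> R0" using R unfolding g_def by auto
    then show "y \<in> D" using in_quotient_imp_closed[OF e0 that repD[OF that]] by blast
  qed
  have repg: "rep D \<in> g D" if "D \<in> I // R0" for D
    unfolding g_def using repD[OF that] DI[OF that] e1 by (meson equiv_class_self subsetD)
  have inj: "inj_on g (I // R0 - {C})"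
  proof (rule inj_onI)
    fix D D' assume D: "D \<in> I // R0 - {C}" and D': "D' \<in> I // R0 - {C}" and eq: "g D = g D'"
    have "rep D \<in> D \<inter> D'" using repD repg[of D] gsub[of D'] D D' eq by auto
    then show "D = D'" using quotient_disj[OF e0] D D' by blast
  qed
  have disj: "g ` (I // R0 - {C}) \<inter> K = {}"
  proof (rule ccontr)
    assume "g ` (I // R0 - {C}) \<inter> K \<noteq> {}"
    then obtain D where D: "D \<in> I // R0 - {C}" "g D \<in> K" by blast
    have "rep D \<in> D \<inter> C" using repg gsub D KC by blast
    then show False using quotient_disj[OF e0] D C by blast
  qed
  have fQ0: "finite (I // R0)" and fQ1: "finite (I // R1)"
    using fI e0 e1 by (simp_all add: equiv_type finite_quotient)
  have fK: "finite K" using K fQ1 finite_subset by blast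
  have "card (I // R0) - 1 + card K = card (g ` (I // R0 - {C})) + card K"
    using card_image[OF inj] C fQ0 by simp
  also have "\<dots> = card (g ` (I // R0 - {C}) \<union> K)"
    using disj fK fQ0 by (simp add: card_Un_disjoint)
  also have "\<dots> \<le> card (I // R1)" using gQ K fQ1 by (intro card_mono) auto
  finally show ?thesis .
qed

lemma induced_class_uniform:
  assumes "C \<in> induced_classes n \<F>" "x \<in> C" "y \<in> C" "T \<in> \<F>"
  shows "x \<in> T \<longleftrightarrow> y \<in> T"
  using assms unfolding induced_classes_def
  by (auto elim!: quotientE simp: not_sep_rel_iff)

lemma induced_class_subset: "C \<in> induced_classes n \<F> \<Longrightarrow> C \<subseteq> {1..n}"
  unfolding induced_classes_def by (auto elim!: quotientE simp: not_sep_rel_iff)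

lemma C_test_not_in_F:
  assumes "C \<in> induced_classes n \<F>" "is_C_test C S"
  shows "S \<notin> \<F>"
  using assms induced_class_uniform[OF assms(1)] unfolding is_C_test_def by blast

lemma splitting_a_class:
  assumes C: "C \<in> induced_classes n \<F>" and P: "P \<subseteq> C"
    and distinguished: "\<And>p q. p \<in> P \<Longrightarrow> q \<in> P \<Longrightarrow> (\<forall>T\<in>X. p \<in> T \<longleftrightarrow> q \<in> T) \<Longrightarrow> p = q"
  shows "card (induced_classes n \<F>) - 1 + card P \<le> card (induced_classes n (\<F> \<union> X))"
proof -
  let ?R0 = "not_sep_rel n \<F>" and ?R1 = "not_sep_rel n (\<F> \<union> X)"
  let ?cls = "\<lambda>p. ?R1 `` {p}"
  have Cn: "C \<subseteq> {1..n}" using induced_class_subset[OF C] .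
  have R: "?R1 \<subseteq> ?R0" unfolding not_sep_rel_def by blast
  have "inj_on ?cls P"
  proof (rule inj_onI)
    fix p q assume pq: "p \<in> P" "q \<in> P" "?cls p = ?cls q"
    have "q \<in> ?cls q" using pq(2) P Cn by (auto simp: not_sep_rel_iff)
    then have "(p, q) \<in> ?R1" using pq(3) by blast
    then show "p = q" using distinguished pq(1,2) by (auto simp: not_sep_rel_iff)
  qed
  then have "card (?cls ` P) = card P" by (rule card_image)
  moreover have "card (induced_classes n \<F>) - 1 + card (?cls ` P)
      \<le> card (induced_classes n (\<F> \<union> X))"
    unfolding induced_classes_def
  proof (rule refinement_card_bound[OF not_sep_rel_equiv not_sep_rel_equiv R])
    show "C \<in> {1..n} // ?R0" using C unfolding induced_classes_def .
    show "?cls ` P \<subseteq> {1..n} // ?R1" using P Cn by (auto intro: quotientI)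
    show "\<forall>k\<in>?cls ` P. k \<subseteq> C"
      using P R in_quotient_imp_closed[OF not_sep_rel_equiv \<open>C \<in> {1..n} // ?R0\<close>] by blast
  qed simp
  ultimately show ?thesis by simp
qed

lemma card_induced_classes_pos:
  assumes "C \<in> induced_classes n \<F>"
  shows "0 < card (induced_classes n \<F>)"
proof -
  have "finite (induced_classes n \<F>)"
    unfolding induced_classes_def using not_sep_rel_equiv
    by (simp add: equiv_type finite_quotient)
  then show ?thesis using assms card_gt_0_iff by blast
qed

(* Key step: traces of two C-tests never cross.  Crossing traces would cover less than C by
   the half-size bound, so S and S' would distinguish four points of C and add three classes. *)
lemma C_test_traces_laminar:
  assumes C: "C \<in> induced_classes n \<F>"
    and two_more: "\<forall>T\<in>\<T> - \<F>. \<forall>T'\<in>\<T> - \<F>.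
          card (induced_classes n (\<F> \<union> {T, T'})) \<le> card (induced_classes n \<F>) + 2"
    and half: "\<forall>S\<in>\<T>. is_C_test C S \<longrightarrow> 2 * card (S \<inter> C) \<le> card C"
    and S: "S \<in> \<T>" "is_C_test C S" and S': "S' \<in> \<T>" "is_C_test C S'"
  shows "laminar {S \<inter> C, S' \<inter> C}"
proof (rule ccontr)
  assume "\<not> laminar {S \<inter> C, S' \<inter> C}"
  then obtain a b c where a: "a \<in> C" "a \<in> S" "a \<in> S'" and b: "b \<in> C" "b \<in> S" "b \<notin> S'"
    and c: "c \<in> C" "c \<notin> S" "c \<in> S'"
    unfolding laminar_def by blast
  have finC: "finite C" using induced_class_subset[OF C] finite_subset by blast
  have "card (S \<inter> C) + card (S' \<inter> C) = card (S \<inter> C \<union> S' \<inter> C) + card (S \<inter> C \<inter> (S' \<inter> C))"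
    using finC by (intro card_Un_Int) auto
  moreover have "card (S \<inter> C \<inter> (S' \<inter> C)) \<noteq> 0" using a finC by auto
  moreover have "2 * card (S \<inter> C) \<le> card C" "2 * card (S' \<inter> C) \<le> card C"
    using half S S' by blast+
  ultimately have "card (S \<inter> C \<union> S' \<inter> C) < card C" by linarith
  then have "S \<inter> C \<union> S' \<inter> C \<noteq> C" by auto
  then obtain d where d: "d \<in> C" "d \<notin> S" "d \<notin> S'" by blast
  (* a, b, c, d lie in the four different cells cut out of C by S and S'. *)
  let ?P = "{a, b, c, d}"
  have "a \<noteq> b" "a \<noteq> c" "a \<noteq> d" "b \<noteq> c" "b \<noteq> d" "c \<noteq> d" using a b c d by blast+
  then have "card ?P = 4" by simp
  moreover have "card (induced_classes n \<F>) - 1 + card ?P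
      \<le> card (induced_classes n (\<F> \<union> {S, S'}))"
    by (rule splitting_a_class[OF C]) (use a b c d in blast)+
  moreover have "card (induced_classes n (\<F> \<union> {S, S'})) \<le> card (induced_classes n \<F>) + 2"
    using two_more S S' C_test_not_in_F[OF C] by blast
  ultimately show False using card_induced_classes_pos[OF C] by linarith
qed

lemma O_arcs_hasse: "O_arcs \<T> C = hasse (O_verts \<T> C)"
  by (simp add: O_arcs_def hasse_def)

lemma singleton_in_O_verts:
  assumes "{x} \<in> \<T>" "x \<in> C" "C \<noteq> {x}"
  shows "{x} \<in> O_verts \<T> C"
proof -
  have "is_C_test C {x}" using assms(2,3) unfolding is_C_test_def by blast
  then show ?thesis using assms(1,2) unfolding O_verts_def by blast
qed

lemma O_verts_rooted_laminar:
  assumes C: "C \<in> induced_classes n \<F>"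
    and two_more: "\<forall>T\<in>\<T> - \<F>. \<forall>T'\<in>\<T> - \<F>.
          card (induced_classes n (\<F> \<union> {T, T'})) \<le> card (induced_classes n \<F>) + 2"
    and half: "\<forall>S\<in>\<T>. is_C_test C S \<longrightarrow> 2 * card (S \<inter> C) \<le> card C"
  shows "rooted_laminar (O_verts \<T> C) C"
proof
  have "finite C" using induced_class_subset[OF C] finite_subset by blast
  moreover have "O_verts \<T> C \<subseteq> Pow C" unfolding O_verts_def by blast
  ultimately show "finite (O_verts \<T> C)" by (meson finite_Pow_iff finite_subset)
  show "C \<in> O_verts \<T> C" unfolding O_verts_def by blast
  show "X \<subseteq> C" if "X \<in> O_verts \<T> C" for X using that unfolding O_verts_def by blast
  show "X \<noteq> {}" if "X \<in> O_verts \<T> C" "X \<noteq> C" for X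
    using that unfolding O_verts_def is_C_test_def by blast
  show "laminar (O_verts \<T> C)"
    unfolding laminar_def
  proof (intro ballI)
    fix X Y assume "X \<in> O_verts \<T> C" "Y \<in> O_verts \<T> C"
    then consider "X = C \<or> Y = C"
      | S S' where "S \<in> \<T>" "is_C_test C S" "X = S \<inter> C" "S' \<in> \<T>" "is_C_test C S'" "Y = S' \<inter> C"
      unfolding O_verts_def by blast
    then show "X \<inter> Y = {} \<or> X \<subseteq> Y \<or> Y \<subseteq> X"
    proof cases
      case 1
      moreover have "X \<subseteq> C" "Y \<subseteq> C"
        using \<open>X \<in> O_verts \<T> C\<close> \<open>Y \<in> O_verts \<T> C\<close> unfolding O_verts_def by blast+
      ultimately show ?thesis by blast
    next
      case 2
      then show ?thesis
        using C_test_traces_laminar[OF C two_more half 2(1,2,4,5)] by (simp add: laminar_def)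
    qed
  qed
qed

(* The theorem: O_C is an out-tree rooted at C whose non-leaves branch.  Only the two-test
   bound, the half-size bound and the singleton tests are needed. *)
theorem mainTheorem11:
  fixes n :: nat and \<T> \<F> :: "nat set set"
  assumes cover: "is_test_cover n \<T>"
    and singletons: "\<forall>x\<in>{1..n}. {x} \<in> \<T>"
    and F_sub: "\<F> \<subseteq> \<T>"
    and one_more: "\<forall>T\<in>\<T> - \<F>.
          card (induced_classes n (\<F> \<union> {T})) \<le> card (induced_classes n \<F>) + 1"
    and two_more: "\<forall>T\<in>\<T> - \<F>. \<forall>T'\<in>\<T> - \<F>.
          card (induced_classes n (\<F> \<union> {T, T'})) \<le> card (induced_classes n \<F>) + 2"
    and half: "\<forall>C\<in>induced_classes n \<F>. \<forall>S\<in>\<T>.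
          is_C_test C S \<longrightarrow> 2 * card (S \<inter> C) \<le> card C"
    and C: "C \<in> induced_classes n \<F>"
  shows "is_out_tree_rooted (O_verts \<T> C) (O_arcs \<T> C) C \<and>
         (\<forall>v\<in>O_verts \<T> C. 0 < out_degree (O_arcs \<T> C) v \<longrightarrow> 2 \<le> out_degree (O_arcs \<T> C) v)"
proof -
  interpret rooted_laminar "O_verts \<T> C" C
    using O_verts_rooted_laminar[OF C two_more bspec[OF half C]] .
  have "{x} \<in> O_verts \<T> C" if "x \<in> C" "C \<noteq> {x}" for x
    using singleton_in_O_verts singletons induced_class_subset[OF C] that by blast
  then show ?thesis unfolding O_arcs_hasse using out_tree out_degree_two by blast
qed

end
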